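(* For all words $x,y$ over a finite alphabet $\Sigma$, $\mathrm{ged}(x,y)\le\mathrm{ned}(x,y)$.
   Context: An edit path from $x$ to $y$ is a sequence $p=(a_1,b_1)\cdots(a_n,b_n)$ with $(a_i,b_i)\in(\Sigma\cup\{\varepsilon\})^2\setminus\{(\varepsilon,\varepsilon)\}$, $a_1\cdots a_n=x$ and $b_1\cdots b_n=y$; $|p|=n$ and $\mathrm{wgt}(p)=|\{i:a_i\ne b_i\}|$ (uniform weights: no-ops cost $0$, substitutions, insertions and deletions cost $1$). $\mathrm{ed}(x,y)=\min_p\mathrm{wgt}(p)$; $\mathrm{ned}(x,y)=\min_p\mathrm{wgt}(p)/|p|$ (with $\mathrm{ned}(\varepsilon,\varepsilon)=0$); $\mathrm{ged}(x,y)=\frac{2\,\mathrm{ed}(x,y)}{|x|+|y|+\mathrm{ed}(x,y)}$ (with $\mathrm{ged}(\varepsilon,\varepsilon)=0$). *)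

theory Defs
  imports Complex_Main
begin

text \<open>An edit operation is a pair (a,b) with a,b in Sigma \<union> {epsilon};
  epsilon is represented by None.  The pair (epsilon,epsilon) is excluded.\<close>
type_synonym 'a edit_op = "'a option \<times> 'a option"

definition opt_word :: "'a option \<Rightarrow> 'a list" where
  "opt_word a = (case a of None \<Rightarrow> [] | Some c \<Rightarrow> [c])"

definition edit_paths :: "'a list \<Rightarrow> 'a list \<Rightarrow> 'a edit_op list set" where
  "edit_paths x y = {p. (\<forall>e\<in>set p. e \<noteq> (None, None))
                       \<and> concat (map (opt_word \<circ> fst) p) = x
                       \<and> concat (map (opt_word \<circ> snd) p) = y}"

text \<open>Uniform weights: number of positions with a_i \<noteq> b_i.\<close>
definition wgt :: "'a edit_op list \<Rightarrow> nat" where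
  "wgt p = length (filter (\<lambda>e. fst e \<noteq> snd e) p)"

definition ed :: "'a list \<Rightarrow> 'a list \<Rightarrow> nat" where
  "ed x y = (INF p\<in>edit_paths x y. wgt p)"

definition ned :: "'a list \<Rightarrow> 'a list \<Rightarrow> real" where
  "ned x y = (if x = [] \<and> y = [] then 0
              else (INF p\<in>edit_paths x y. real (wgt p) / real (length p)))"

definition ged :: "'a list \<Rightarrow> 'a list \<Rightarrow> real" where
  "ged x y = (if x = [] \<and> y = [] then 0
              else 2 * real (ed x y) / (real (length x) + real (length y) + real (ed x y)))"

end

theory Submission
  imports Defs
begin

text \<open>Every operation of an edit path either is a no-op, reading one symbol of each word, or
  costs 1 and reads at least one symbol; hence \<open>2 |p| \<le> |x| + |y| + wgt p\<close>, i.e.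
  \<open>wgt p / |p| \<ge> 2 wgt p / (|x| + |y| + wgt p)\<close>.  Since \<open>t \<mapsto> t / (c + t)\<close> is increasing
  and \<open>ed x y \<le> wgt p\<close>, the right-hand side is at least \<open>ged x y\<close>.\<close>

lemma edit_paths_nonempty: "edit_paths x y \<noteq> {}"
proof -
  let ?p = "map (\<lambda>c. (Some c, None)) x @ map (\<lambda>c. (None, Some c)) y"
  have "?p \<in> edit_paths x y"
    by (auto simp: edit_paths_def opt_word_def o_def concat_map_singleton)
  then show ?thesis by blast
qed

lemma ed_le_wgt: "p \<in> edit_paths x y \<Longrightarrow> ed x y \<le> wgt p"
  unfolding ed_def by (rule cINF_lower) auto

lemma double_length_le_wgt:
  assumes "\<forall>e\<in>set p. e \<noteq> (None, None)"
  shows "2 * length p \<le> length (concat (map (opt_word \<circ> fst) p))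
            + length (concat (map (opt_word \<circ> snd) p)) + wgt p"
  using assms
proof (induction p)
  case Nil
  then show ?case by (simp add: wgt_def)
next
  case (Cons e p)
  obtain a b where e: "e = (a, b)" by fastforce
  have "(a, b) \<noteq> (None, None)" using Cons.prems e by auto
  then have "2 \<le> length (opt_word a) + length (opt_word b) + (if a \<noteq> b then 1 else 0)"
    by (cases a; cases b) (auto simp: opt_word_def)
  with Cons show ?case by (simp add: e wgt_def split: if_splits)
qed

lemma edit_path_double_length_le:
  "p \<in> edit_paths x y \<Longrightarrow> 2 * length p \<le> length x + length y + wgt p"
  using double_length_le_wgt[of p] by (auto simp: edit_paths_def)

lemma divide_add_mono:
  fixes c s t :: real
  assumes "0 \<le> c" "0 \<le> s" "s \<le> t" "0 < c + s"
  shows "s / (c + s) \<le> t / (c + t)"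
proof -
  have "s * c \<le> t * c" using assms by (simp add: mult_right_mono)
  then show ?thesis using assms by (simp add: divide_simps algebra_simps)
qed

lemma ged_le_path_ratio:
  assumes p: "p \<in> edit_paths x y" and nonempty: "x \<noteq> [] \<or> y \<noteq> []"
  shows "ged x y \<le> real (wgt p) / real (length p)"
proof -
  define c where "c = real (length x) + real (length y)"
  define w where "w = real (wgt p)"
  define n where "n = real (length p)"
  have c_pos: "0 < c" using nonempty unfolding c_def by (cases x) auto
  have length_bound: "2 * n \<le> c + w"
    using edit_path_double_length_le[OF p] unfolding c_def w_def n_def by linarith
  have "p \<noteq> []" using p nonempty by (auto simp: edit_paths_def)
  then have n_pos: "0 < n" by (simp add: n_def)
  have "ged x y = 2 * (real (ed x y) / (c + real (ed x y)))"
    using nonempty by (simp add: ged_def c_def)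
  also have "\<dots> \<le> 2 * (w / (c + w))"
    using divide_add_mono[of c "real (ed x y)" w] ed_le_wgt[OF p] c_pos
    by (simp add: w_def)
  also have "\<dots> \<le> w / n"
  proof -
    have "2 * n * w \<le> (c + w) * w"
      using mult_right_mono[OF length_bound] by (simp add: w_def)
    then show ?thesis using n_pos c_pos by (simp add: w_def divide_simps algebra_simps)
  qed
  finally show ?thesis by (simp add: w_def n_def)
qed

theorem mainTheorem11:
  fixes x y :: "'a::finite list"
  shows "ged x y \<le> ned x y"
proof (cases "x = [] \<and> y = []")
  case True
  then show ?thesis by (simp add: ged_def ned_def)
next
  case False
  then have "ned x y = (INF p\<in>edit_paths x y. real (wgt p) / real (length p))"
    unfolding ned_def by (simp only: if_False)
  also have "ged x y \<le> \<dots>"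
    using False by (intro cINF_greatest edit_paths_nonempty ged_le_path_ratio) auto
  finally show ?thesis .
qed

end
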